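(* Consider the free abelian group $\mathbb Z\Delta$ on $\Delta=\{D_1,\dots,D_6\}$ and the elements $\sigma_1=D_1+D_2-D_3$, $\sigma_2=-D_1+D_2+D_3-D_4-D_6$, $\sigma_3=-D_2+D_3+D_4-D_5$, $\sigma_4=-D_3+D_4+D_5$, $\sigma_5=-D_5+D_6$, with $\Sigma=\{\sigma_1,\dots,\sigma_5\}$. Let $\gamma\in\mathbb N\Sigma$ be a covering difference in $\mathbb N\Delta$ with $\sigma_5\in\mathrm{supp}_\Sigma\gamma$. Then either $\gamma=\sigma_5=-D_5+D_6$ or $\gamma=\sigma_2+\sigma_4+\sigma_5=-D_1+D_2$. Moreover every other covering difference $\gamma\in\mathbb N\Sigma$ (i.e. different from these two) satisfies $\mathrm{ht}(\gamma^+)=2$.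
   Context: For $D,E\in\mathbb Z\Delta$ write $D\le_\Sigma E$ if $E-D\in\mathbb N\Sigma$, and $D<_\Sigma E$ if moreover $D\neq E$. For $E,F\in\mathbb N\Delta$ with $E<_\Sigma F$, say $F$ covers $E$ if there is no $G\in\mathbb N\Delta$ with $E<_\Sigma G<_\Sigma F$; then $F-E$ is called a covering difference in $\mathbb N\Delta$. For $E=\sum_D k_DD\in\mathbb Z\Delta$, $E^+=\sum_{k_D>0}k_DD$, $E^-=E^+-E$, and $\mathrm{ht}(E)=\sum_D k_D$. For $\gamma=\sum a_i\sigma_i\in\mathbb N\Sigma$ (the $\sigma_i$ are linearly independent), $\mathrm{supp}_\Sigma\gamma=\{\sigma_i:a_i>0\}$. *)

theory Defs
  imports Main "HOL-Library.Function_Algebras"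
begin

text \<open>The free abelian group on Delta = {D_1,...,D_6}: integer-valued functions on nat
  supported in {1..6}; the basis element D_i is the indicator of i.\<close>

definition Delta :: "nat set" where "Delta = {1..6}"

definition ZDelta :: "(nat \<Rightarrow> int) set" where
  "ZDelta = {E. \<forall>d. d \<notin> Delta \<longrightarrow> E d = 0}"

definition NDelta :: "(nat \<Rightarrow> int) set" where
  "NDelta = {E \<in> ZDelta. \<forall>d. 0 \<le> E d}"

definition Dbas :: "nat \<Rightarrow> nat \<Rightarrow> int" where
  "Dbas i = (\<lambda>d. if d = i then 1 else 0)"

definition sigma :: "nat \<Rightarrow> nat \<Rightarrow> int" where
  "sigma i =
    (if i = 1 then Dbas 1 + Dbas 2 - Dbas 3
     else if i = 2 then - Dbas 1 + Dbas 2 + Dbas 3 - Dbas 4 - Dbas 6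
     else if i = 3 then - Dbas 2 + Dbas 3 + Dbas 4 - Dbas 5
     else if i = 4 then - Dbas 3 + Dbas 4 + Dbas 5
     else if i = 5 then - Dbas 5 + Dbas 6
     else 0)"

definition comb :: "(nat \<Rightarrow> nat) \<Rightarrow> nat \<Rightarrow> int" where
  "comb a = (\<lambda>d. \<Sum>i\<in>{1..5}. int (a i) * sigma i d)"

definition NSigma :: "(nat \<Rightarrow> int) set" where
  "NSigma = {comb a | a. True}"

definition leS :: "(nat \<Rightarrow> int) \<Rightarrow> (nat \<Rightarrow> int) \<Rightarrow> bool" where
  "leS D E \<longleftrightarrow> E - D \<in> NSigma"

definition lessS :: "(nat \<Rightarrow> int) \<Rightarrow> (nat \<Rightarrow> int) \<Rightarrow> bool" where
  "lessS D E \<longleftrightarrow> leS D E \<and> D \<noteq> E"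

definition covers :: "(nat \<Rightarrow> int) \<Rightarrow> (nat \<Rightarrow> int) \<Rightarrow> bool" where
  "covers F E \<longleftrightarrow> E \<in> NDelta \<and> F \<in> NDelta \<and> lessS E F \<and>
     \<not> (\<exists>G \<in> NDelta. lessS E G \<and> lessS G F)"

definition covering_difference :: "(nat \<Rightarrow> int) \<Rightarrow> bool" where
  "covering_difference \<gamma> \<longleftrightarrow> (\<exists>E F. covers F E \<and> \<gamma> = F - E)"

text \<open>Sigma-support of gamma in N Sigma (sigma's are linearly independent, so
  the coefficients are unique).\<close>
definition suppS :: "(nat \<Rightarrow> int) \<Rightarrow> (nat \<Rightarrow> int) set" where
  "suppS \<gamma> = {sigma i | i. i \<in> {1..5} \<and> (\<exists>a. \<gamma> = comb a \<and> 0 < a i)}"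

definition posp :: "(nat \<Rightarrow> int) \<Rightarrow> nat \<Rightarrow> int" where
  "posp E = (\<lambda>d. if 0 < E d then E d else 0)"

definition ht :: "(nat \<Rightarrow> int) \<Rightarrow> int" where
  "ht E = (\<Sum>d\<in>Delta. E d)"

end

theory Submission
  imports Defs
begin

text \<open>
  Write gamma = F - E = sum a_i sigma_i for F covering E. If 0 <= b <= a and beta = sum b_i sigma_i
  is neither 0 nor gamma, then F - beta lies strictly between E and F, so it must leave N Delta;
  as E >= 0 this means that beta exceeds max 0 gamma in some coordinate. Testing this against
  eleven 0/1-vectors b leaves, by linear arithmetic, only twelve possible coefficient vectors a.
  The two of them with a_5 > 0 give sigma_5 and sigma_2 + sigma_4 + sigma_5, and each of the
  other ten has ht(gamma^+) = 2.
\<close>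

lemma atLeastAtMost_1_5: "{1..5::nat} = {1, 2, 3, 4, 5}"
  by auto

lemma Delta_eq: "Delta = {1, 2, 3, 4, 5, 6}"
  by (auto simp: Delta_def)

lemma comb_apply:
  "comb a d =
    (if d = 1 then int (a 1) - int (a 2)
     else if d = 2 then int (a 1) + int (a 2) - int (a 3)
     else if d = 3 then - int (a 1) + int (a 2) + int (a 3) - int (a 4)
     else if d = 4 then - int (a 2) + int (a 3) + int (a 4)
     else if d = 5 then - int (a 3) + int (a 4) - int (a 5)
     else if d = 6 then - int (a 2) + int (a 5)
     else 0)"
  unfolding comb_def atLeastAtMost_1_5 by (simp add: sigma_def Dbas_def)

lemma comb_eq_0_outside_Delta: "d \<notin> Delta \<Longrightarrow> comb a d = 0"
  by (auto simp: comb_apply Delta_def)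

lemma comb_eq_comb_iff: "comb a = comb b \<longleftrightarrow> (\<forall>i\<in>{1..5}. a i = b i)"
proof
  assume "comb a = comb b"
  then have "comb a d = comb b d" for d by simp
  from this[of 1] this[of 2] this[of 3] this[of 4] this[of 5] this[of 6]
  show "\<forall>i\<in>{1..5}. a i = b i"
    unfolding atLeastAtMost_1_5 by (simp add: comb_apply)
next
  assume "\<forall>i\<in>{1..5}. a i = b i"
  then show "comb a = comb b" by (simp add: comb_def)
qed

lemma comb_diff:
  assumes "b \<le> a"
  shows "comb (a - b) = comb a - comb b"
proof
  fix d
  have "int ((a - b) i) = int (a i) - int (b i)" for i
    using assms by (simp add: le_fun_def of_nat_diff)
  then show "comb (a - b) d = (comb a - comb b) d"
    by (simp add: comb_def left_diff_distrib sum_subtractf)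
qed

lemma comb_in_NSigma: "comb a \<in> NSigma"
  by (auto simp: NSigma_def)

lemma sigma_eq_comb: "i \<in> {1..5} \<Longrightarrow> sigma i = comb (\<lambda>j. of_bool (j = i))"
  by (simp add: comb_def of_bool_def if_distrib if_distribR cong: if_cong)

lemma sigma_inject: "i \<in> {1..5} \<Longrightarrow> j \<in> {1..5} \<Longrightarrow> sigma i = sigma j \<longleftrightarrow> i = j"
  by (auto simp: sigma_eq_comb comb_eq_comb_iff)

lemma sigma_in_suppS_comb_iff:
  assumes "i \<in> {1..5}"
  shows "sigma i \<in> suppS (comb a) \<longleftrightarrow> 0 < a i"
proof
  assume "sigma i \<in> suppS (comb a)"
  then obtain j b where j: "j \<in> {1..5}" "sigma j = sigma i" "comb a = comb b" "0 < b j"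
    unfolding suppS_def by auto
  from j(1,2) assms have "j = i" by (simp add: sigma_inject)
  with j assms show "0 < a i" by (simp add: comb_eq_comb_iff)
qed (use assms in \<open>auto simp: suppS_def\<close>)

lemma NDeltaI:
  "(\<And>d. d \<in> Delta \<Longrightarrow> 0 \<le> G d) \<Longrightarrow> (\<And>d. d \<notin> Delta \<Longrightarrow> G d = 0) \<Longrightarrow> G \<in> NDelta"
  by (force simp: NDelta_def ZDelta_def)

text \<open>Equivalently, posp (comb a) - comb b is not in NDelta: no proper nonzero part of gamma
  can be removed from gamma^+ inside N Delta.\<close>

definition sigma_irreducible :: "(nat \<Rightarrow> nat) \<Rightarrow> bool" where
  "sigma_irreducible a \<longleftrightarrow>
     (\<forall>b \<le> a. comb b \<noteq> 0 \<longrightarrow> comb b \<noteq> comb a \<longrightarrow> (\<exists>d. 0 < comb b d \<and> comb a d < comb b d))"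

lemma covers_sigma_irreducible:
  assumes cov: "covers F E" and diff: "F - E = comb a"
  shows "sigma_irreducible a"
  unfolding sigma_irreducible_def
proof (intro allI impI)
  fix b assume "b \<le> a" and b_nonzero: "comb b \<noteq> 0" and b_proper: "comb b \<noteq> comb a"
  have E: "E \<in> NDelta" and F: "F \<in> NDelta"
    and no_between: "\<not> (\<exists>G \<in> NDelta. lessS E G \<and> lessS G F)"
    using cov by (auto simp: covers_def)
  have "F - comb b - E = comb (a - b)"
    using diff comb_diff[OF \<open>b \<le> a\<close>] by (simp add: algebra_simps)
  then have "lessS E (F - comb b)"
    using b_proper diff by (auto simp: lessS_def leS_def comb_in_NSigma)
  moreover have "lessS (F - comb b) F"
    using b_nonzero by (auto simp: lessS_def leS_def comb_in_NSigma)
  ultimately have "F - comb b \<notin> NDelta"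
    using no_between by blast
  moreover have "(F - comb b) d = 0" if "d \<notin> Delta" for d
    using F that by (simp add: comb_eq_0_outside_Delta NDelta_def ZDelta_def)
  ultimately obtain d where "(F - comb b) d < 0"
    using NDeltaI[of "F - comb b"] not_le by blast
  moreover have "0 \<le> E d" and "0 \<le> F d"
    using E F by (auto simp: NDelta_def)
  moreover have "comb a d = F d - E d"
    using fun_cong[OF diff, of d] by simp
  ultimately show "\<exists>d. 0 < comb b d \<and> comb a d < comb b d"
    by (intro exI[of _ d]) simp
qed

lemma covering_differenceE:
  assumes "covering_difference \<gamma>"
  obtains a where "\<gamma> = comb a" "comb a \<noteq> 0" "sigma_irreducible a"
proof -
  obtain E F where cov: "covers F E" and \<gamma>: "\<gamma> = F - E"
    using assms by (auto simp: covering_difference_def)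
  then obtain a where diff: "F - E = comb a"
    by (auto simp: covers_def lessS_def leS_def NSigma_def)
  have "E \<noteq> F" using cov by (simp add: covers_def lessS_def)
  then have "comb a \<noteq> 0" using diff by (metis diff_eq_diff_eq diff_self)
  with that show thesis using \<gamma> diff covers_sigma_irreducible[OF cov diff] by blast
qed

lemma sigma_irreducible_indicator:
  assumes irr: "sigma_irreducible a" and S: "S \<subseteq> {1..5}" "S \<noteq> {}"
    and le: "\<forall>i\<in>S. 1 \<le> a i"
  defines "b \<equiv> \<lambda>i. of_bool (i \<in> S)"
  shows "(\<forall>i\<in>{1..5}. a i = b i) \<or> (\<exists>d\<in>Delta. 0 < comb b d \<and> comb a d < comb b d)"
proof (cases "\<forall>i\<in>{1..5}. a i = b i")
  case False
  have "b \<le> a" using le by (auto simp: b_def le_fun_def)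
  moreover have "comb b \<noteq> 0"
    using S comb_eq_comb_iff[of b "\<lambda>_. 0"] by (auto simp: b_def comb_def zero_fun_def)
  moreover have "comb b \<noteq> comb a" using False comb_eq_comb_iff[of b a] by fastforce
  ultimately obtain d where "0 < comb b d" "comb a d < comb b d"
    using irr by (auto simp: sigma_irreducible_def)
  moreover from this have "d \<in> Delta" using comb_eq_0_outside_Delta by fastforce
  ultimately show ?thesis by blast
qed simp

definition irreducible_coefficients :: "(nat \<times> nat \<times> nat \<times> nat \<times> nat) set" where
  "irreducible_coefficients =
    {(0,0,0,0,1), (0,0,0,1,0), (0,0,1,0,0), (0,0,1,1,0), (0,1,0,0,0), (0,1,0,1,0),
     (0,1,0,1,1), (0,1,1,0,0), (1,0,0,0,0), (1,0,1,0,0), (1,1,0,0,0), (1,1,1,1,0)}"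

lemma sigma_irreducible_coefficients:
  assumes irr: "sigma_irreducible a" and nonzero: "comb a \<noteq> 0"
  shows "(a 1, a 2, a 3, a 4, a 5) \<in> irreducible_coefficients"
proof -
  note test = sigma_irreducible_indicator[OF irr]
  have "\<not> (\<forall>i\<in>{1..5}. a i = 0)"
    using nonzero comb_eq_comb_iff[of a "\<lambda>_. 0"] by (auto simp: comb_def zero_fun_def)
  then show ?thesis
    using test[of "{5}"] test[of "{4}"] test[of "{2,4}"] test[of "{1,3}"] test[of "{3,4}"]
      test[of "{1,2}"] test[of "{2,3}"] test[of "{3}"] test[of "{2}"] test[of "{2,4,5}"] test[of "{1}"]
    unfolding irreducible_coefficients_def Delta_eq atLeastAtMost_1_5
    apply (simp add: comb_apply)
    \<comment> \<open>smt sees the coefficients only through int, so the nat atoms left by simp are transferred\<close>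
    apply (simp only: One_nat_def[symmetric] flip: of_nat_eq_iff[where 'a=int]
        of_nat_le_iff[where 'a=int] of_nat_less_iff[where 'a=int])
    apply (simp only: of_nat_0 of_nat_1)
    by (smt (verit) of_nat_0_le_iff)
qed

lemma sigma_5_eq: "sigma 5 = - Dbas 5 + Dbas 6"
  by (simp add: sigma_def)

lemma sigma_2_4_5_eq: "sigma 2 + sigma 4 + sigma 5 = - Dbas 1 + Dbas 2"
  by (auto simp: sigma_def Dbas_def fun_eq_iff)

lemma comb_eq_sigma_5: "(a 1, a 2, a 3, a 4, a 5) = (0, 0, 0, 0, 1) \<Longrightarrow> comb a = sigma 5"
  by (auto simp: fun_eq_iff comb_apply sigma_def Dbas_def)

lemma comb_eq_sigma_2_4_5:
  "(a 1, a 2, a 3, a 4, a 5) = (0, 1, 0, 1, 1) \<Longrightarrow> comb a = sigma 2 + sigma 4 + sigma 5"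
  by (auto simp: fun_eq_iff comb_apply sigma_def Dbas_def)

lemma ht_eq: "ht E = E 1 + E 2 + E 3 + E 4 + E 5 + E 6"
  unfolding ht_def Delta_eq by simp

lemma ht_posp_comb:
  assumes "(a 1, a 2, a 3, a 4, a 5) \<in> irreducible_coefficients - {(0,0,0,0,1), (0,1,0,1,1)}"
  shows "ht (posp (comb a)) = 2"
  using assms by (simp add: irreducible_coefficients_def)
    (elim conjE disjE; simp add: ht_eq posp_def comb_apply)

theorem lemma2p7:
  shows "(\<forall>\<gamma>. \<gamma> \<in> NSigma \<and> covering_difference \<gamma> \<and> sigma 5 \<in> suppS \<gamma> \<longrightarrow>
            (\<gamma> = sigma 5 \<and> sigma 5 = - Dbas 5 + Dbas 6) \<or>
            (\<gamma> = sigma 2 + sigma 4 + sigma 5 \<and> sigma 2 + sigma 4 + sigma 5 = - Dbas 1 + Dbas 2))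
       \<and> (\<forall>\<gamma>. \<gamma> \<in> NSigma \<and> covering_difference \<gamma> \<and> \<gamma> \<noteq> sigma 5 \<and>
            \<gamma> \<noteq> sigma 2 + sigma 4 + sigma 5 \<longrightarrow> ht (posp \<gamma>) = 2)"
proof (intro conjI allI impI)
  fix \<gamma> assume \<gamma>: "\<gamma> \<in> NSigma \<and> covering_difference \<gamma> \<and> sigma 5 \<in> suppS \<gamma>"
  then obtain a where a: "\<gamma> = comb a" "comb a \<noteq> 0" "sigma_irreducible a"
    using covering_differenceE by blast
  have "0 < a 5" using \<gamma> a(1) sigma_in_suppS_comb_iff[of 5 a] by simp
  moreover have "(a 1, a 2, a 3, a 4, a 5) \<in> irreducible_coefficients"
    using a sigma_irreducible_coefficients by blast
  ultimately have "(a 1, a 2, a 3, a 4, a 5) \<in> {(0,0,0,0,1), (0,1,0,1,1)}"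
    by (auto simp: irreducible_coefficients_def)
  then show "(\<gamma> = sigma 5 \<and> sigma 5 = - Dbas 5 + Dbas 6) \<or>
      (\<gamma> = sigma 2 + sigma 4 + sigma 5 \<and> sigma 2 + sigma 4 + sigma 5 = - Dbas 1 + Dbas 2)"
    using a(1) comb_eq_sigma_5 comb_eq_sigma_2_4_5 sigma_5_eq sigma_2_4_5_eq by blast
next
  fix \<gamma> assume \<gamma>: "\<gamma> \<in> NSigma \<and> covering_difference \<gamma> \<and> \<gamma> \<noteq> sigma 5 \<and>
      \<gamma> \<noteq> sigma 2 + sigma 4 + sigma 5"
  then obtain a where a: "\<gamma> = comb a" "comb a \<noteq> 0" "sigma_irreducible a"
    using covering_differenceE by blast
  then have "(a 1, a 2, a 3, a 4, a 5) \<in> irreducible_coefficients"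
    using sigma_irreducible_coefficients by blast
  then show "ht (posp \<gamma>) = 2"
    using \<gamma> a(1) ht_posp_comb comb_eq_sigma_5 comb_eq_sigma_2_4_5 by blast
qed

end
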